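(* Let $|v_c\rangle=\frac{1}{\sqrt3}(1,1,1)$ and, for any choice of signs, $|v^{12}\rangle=(\pm\frac{1}{\sqrt3},\pm\sqrt{2/3},0)$ and $|v^{34}\rangle=(\pm\frac{1}{\sqrt3},0,\pm\sqrt{2/3})$ in $\mathbb{R}^3$. Then there do not exist unit vectors $x,y\in\mathbb{R}^3$ satisfying $\langle v_c|x\rangle^2=\tfrac12$, $\langle v^{34}|x\rangle^2=0.69$, $\langle v_c|y\rangle^2=\tfrac12$, $\langle v^{12}|y\rangle^2=0.32$, together with $\langle x|y\rangle\in\{0,1,-1\}$. Equivalently, the choice data of the Ellsberg experiment (preference $0.68/0.32$ for $f_1/f_2$ in state $v^{12}$, $0.31/0.69$ for $f_3/f_4$ in state $v^{34}$, and $0.5/0.5$ for both bets in state $v_c$) cannot be modeled in $\mathbb{R}^3$ by two commuting two-outcome observables $\mathcal{O}_{12}=o_1P_1+o_2P_2$, $\mathcal{O}_{34}=o_3P_3+o_4P_4$ with $P_2,P_4$ of rank one and $P_1=\mathbb{1}-P_2$, $P_3=\mathbb{1}-P_4$ of rank two.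
   Context: $\mathbb{R}^3$ carries its standard Euclidean inner product $\langle\cdot|\cdot\rangle$. *)

theory Defs
  imports "HOL-Analysis.Analysis"
begin

definition v_c :: "real^3" where
  "v_c = vector [1 / sqrt 3, 1 / sqrt 3, 1 / sqrt 3]"

text \<open>Sign choices s1 s2 (resp. s3 s4) range over {1, -1}.\<close>
definition v12 :: "real \<Rightarrow> real \<Rightarrow> real^3" where
  "v12 s1 s2 = vector [s1 / sqrt 3, s2 * sqrt (2/3), 0]"

definition v34 :: "real \<Rightarrow> real \<Rightarrow> real^3" where
  "v34 s3 s4 = vector [s3 / sqrt 3, 0, s4 * sqrt (2/3)]"

end

theory Submission
  imports Defs
begin

text \<open>
  If \<open>x \<bullet> y = 0\<close>, the overlaps \<open>(v_c \<bullet> x)\<^sup>2 + (v_c \<bullet> y)\<^sup>2 = 1\<close> put \<open>v_c\<close> in the plane of \<open>x\<close> and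
  \<open>y\<close>, so \<open>v12 \<bullet> v_c\<close> splits into an \<open>x\<close>-part and a \<open>y\<close>-part; if \<open>y = \<plusminus>x\<close> the \<open>y\<close>-data are data
  on \<open>x\<close>. Either way the conditions on \<open>y\<close> become one condition on \<open>x\<close> alone:
  \<open>((v_c \<bullet> x) (v12 \<bullet> x) - c)\<^sup>2 = 0.16\<close> with \<open>c \<in> {0, v12 \<bullet> v_c}\<close>.
  Since \<open>v_c, v12, v34\<close> form a basis, \<open>x\<close> is a linear function of its three overlaps, and
  \<open>norm x = 1\<close> becomes a quadratic relation between them. Inserting the prescribed values
  leaves an equation \<open>A + B p q = 0\<close> with \<open>A, B \<in> \<rat>(\<surd>2)\<close> and \<open>(p q)\<^sup>2\<close> rational; squaring
  it gives an identity in \<open>\<rat>(\<surd>2)\<close> that fails in each of the sixteen sign cases.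
\<close>

lemma inner_vec3: "u \<bullet> v = u$1 * v$1 + u$2 * v$2 + u$3 * v$3" for u v :: "real^3"
  by (simp add: inner_vec_def sum_3)

lemma inner_v_c: "v_c \<bullet> z = (z$1 + z$2 + z$3) / sqrt 3"
  by (simp add: inner_vec3 v_c_def add_divide_distrib)

lemma inner_v12: "v12 s1 s2 \<bullet> z = (s1 * z$1 + s2 * sqrt 2 * z$2) / sqrt 3"
  by (simp add: inner_vec3 v12_def real_sqrt_divide add_divide_distrib)

lemma inner_v34: "v34 s3 s4 \<bullet> z = (s3 * z$1 + s4 * sqrt 2 * z$3) / sqrt 3"
  by (simp add: inner_vec3 v34_def real_sqrt_divide add_divide_distrib)

lemma norm_v_c: "norm v_c = 1"
proof -
  have "v_c \<bullet> v_c = 1"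
    unfolding inner_v_c by (simp add: v_c_def)
  then show ?thesis
    by (simp add: norm_eq_sqrt_inner)
qed

lemma inner_v12_v_c: "v12 s1 s2 \<bullet> v_c = (s1 + s2 * sqrt 2) / 3"
  by (simp add: inner_v12 v_c_def field_simps)

lemma orthonormal_pair_decomposition:
  fixes v x y :: "'a::real_inner"
  assumes "norm x = 1" "norm y = 1" "x \<bullet> y = 0" "(v \<bullet> x)\<^sup>2 + (v \<bullet> y)\<^sup>2 = (norm v)\<^sup>2"
  shows "v = (v \<bullet> x) *\<^sub>R x + (v \<bullet> y) *\<^sub>R y"
proof -
  let ?u = "v - (v \<bullet> x) *\<^sub>R x - (v \<bullet> y) *\<^sub>R y"
  have "x \<bullet> x = 1" "y \<bullet> y = 1"
    using assms(1,2) by (simp_all add: power2_norm_eq_inner[symmetric])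
  then have "?u \<bullet> ?u = (norm v)\<^sup>2 - (v \<bullet> x)\<^sup>2 - (v \<bullet> y)\<^sup>2"
    using assms(3) by (simp add: inner_simps inner_commute power2_eq_square power2_norm_eq_inner[unfolded power2_eq_square])
  then have "?u \<bullet> ?u = 0"
    using assms(4) by simp
  then have "?u = 0"
    by simp
  then show ?thesis
    by (simp add: algebra_simps)
qed

lemma unit_vectors_inner_eq_one:
  fixes x y :: "'a::real_inner"
  assumes "norm x = 1" "norm y = 1" "x \<bullet> y = 1"
  shows "y = x"
  using norm_cauchy_schwarz_eq[of x y] assms by simp

lemma overlap_pair_reduction:
  fixes v w x y :: "'a::real_inner"
  assumes "norm v = 1" "norm x = 1" "norm y = 1" "(v \<bullet> x)\<^sup>2 = 1/2" "(v \<bullet> y)\<^sup>2 = 1/2"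
    and "x \<bullet> y \<in> {0, 1, -1}"
  shows "\<exists>c \<in> {0, w \<bullet> v}. ((v \<bullet> x) * (w \<bullet> x) - c)\<^sup>2 = (w \<bullet> y)\<^sup>2 / 2"
proof -
  consider "x \<bullet> y = 0" | "y = x" | "y = - x"
    using assms(6) unit_vectors_inner_eq_one[OF assms(2,3)] unit_vectors_inner_eq_one[of x "- y"] assms(2,3)
    by force
  then show ?thesis
  proof cases
    case 1
    have "(v \<bullet> x)\<^sup>2 + (v \<bullet> y)\<^sup>2 = (norm v)\<^sup>2"
      using assms(1,4,5) by simp
    then have "v = (v \<bullet> x) *\<^sub>R x + (v \<bullet> y) *\<^sub>R y"
      by (rule orthonormal_pair_decomposition[OF assms(2,3) 1])
    then have "w \<bullet> v = (v \<bullet> x) * (w \<bullet> x) + (v \<bullet> y) * (w \<bullet> y)"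
      by (metis inner_add_right inner_scaleR_right)
    then have "((v \<bullet> x) * (w \<bullet> x) - w \<bullet> v)\<^sup>2 = (v \<bullet> y)\<^sup>2 * (w \<bullet> y)\<^sup>2"
      by (simp add: power_mult_distrib[symmetric])
    then show ?thesis
      using assms(5) by auto
  next
    case 2
    then show ?thesis
      using assms(4) by (auto simp: power_mult_distrib)
  next
    case 3
    then show ?thesis
      using assms(4) by (auto simp: power_mult_distrib)
  qed
qed

text \<open>
  \<open>x\<close> is recovered from \<open>P, Q, R\<close> by \<open>D x\<^sub>1 = N\<close>, \<open>2 x\<^sub>2 = e \<surd>2 (R - x\<^sub>1)\<close>, \<open>2 x\<^sub>3 = f \<surd>2 (Q - x\<^sub>1)\<close>;
  the relation is \<open>D\<^sup>2\<close> times the norm condition rewritten in terms of \<open>x\<^sub>1\<close>.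
\<close>

lemma unit_vector_eliminant:
  fixes x1 x2 x3 e f :: real
  assumes e: "e\<^sup>2 = 1" and f: "f\<^sup>2 = 1" and unit: "x1\<^sup>2 + x2\<^sup>2 + x3\<^sup>2 = 1"
  defines "P \<equiv> x1 + x2 + x3" and "Q \<equiv> x1 + f * sqrt 2 * x3" and "R \<equiv> x1 + e * sqrt 2 * x2"
  defines "D \<equiv> 2 - (e + f) * sqrt 2" and "N \<equiv> 2 * P - sqrt 2 * (e * R + f * Q)"
  shows "2 * N\<^sup>2 - N * D * (R + Q) + ((R\<^sup>2 + Q\<^sup>2) / 2 - 1) * D\<^sup>2 = 0"
proof -
  have x2: "2 * x2 = e * sqrt 2 * (R - x1)" and x3: "2 * x3 = f * sqrt 2 * (Q - x1)"
    using e f by (simp_all add: R_def Q_def algebra_simps power2_eq_square)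
  have x1: "D * x1 = N"
  proof -
    have "N = 2 * x1 + 2 * x2 + 2 * x3 - e * sqrt 2 * R - f * sqrt 2 * Q"
      by (simp add: N_def P_def algebra_simps)
    also have "\<dots> = D * x1"
      unfolding x2 x3 by (simp add: D_def algebra_simps)
    finally show ?thesis ..
  qed
  have "(2 * x2)\<^sup>2 = 2 * (R - x1)\<^sup>2" "(2 * x3)\<^sup>2 = 2 * (Q - x1)\<^sup>2"
    unfolding x2 x3 using e f by (simp_all add: power_mult_distrib)
  then have "x1\<^sup>2 + (R - x1)\<^sup>2 / 2 + (Q - x1)\<^sup>2 / 2 = 1"
    using unit by (simp add: power_mult_distrib)
  then have quadratic: "2 * x1\<^sup>2 - x1 * (R + Q) + (R\<^sup>2 + Q\<^sup>2) / 2 - 1 = 0"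
    by (simp add: power2_diff field_simps)
  have "2 * N\<^sup>2 - N * D * (R + Q) + ((R\<^sup>2 + Q\<^sup>2) / 2 - 1) * D\<^sup>2
      = D\<^sup>2 * (2 * x1\<^sup>2 - x1 * (R + Q) + (R\<^sup>2 + Q\<^sup>2) / 2 - 1)"
    unfolding x1[symmetric] by (simp add: algebra_simps power2_eq_square)
  then show ?thesis
    using quadratic by simp
qed

text \<open>
  With \<open>R = k P\<close> one has \<open>N = m P + n Q\<close>; the eliminant is then a quadratic form in \<open>P, Q\<close>
  whose \<open>P\<^sup>2\<close>- and \<open>Q\<^sup>2\<close>-terms become constant once \<open>P\<^sup>2 = 3/2\<close> and \<open>Q\<^sup>2 = 207/100\<close>.
\<close>

definition eliminant_const :: "real \<Rightarrow> real \<Rightarrow> real \<Rightarrow> real" where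
  "eliminant_const e f k =
    (let m = 2 - e * sqrt 2 * k; n = - f * sqrt 2; D = 2 - (e + f) * sqrt 2
     in 3/2 * (2 * m\<^sup>2 - D * m * k + k\<^sup>2 * D\<^sup>2 / 2) + 207/100 * (2 * n\<^sup>2 - D * n + D\<^sup>2 / 2) - D\<^sup>2)"

definition eliminant_cross :: "real \<Rightarrow> real \<Rightarrow> real \<Rightarrow> real" where
  "eliminant_cross e f k =
    (let m = 2 - e * sqrt 2 * k; n = - f * sqrt 2; D = 2 - (e + f) * sqrt 2
     in 4 * m * n - D * (m + n * k))"

lemma unit_vector_eliminant_reduced:
  fixes x1 x2 x3 e f k :: real
  assumes e: "e\<^sup>2 = 1" and f: "f\<^sup>2 = 1" and unit: "x1\<^sup>2 + x2\<^sup>2 + x3\<^sup>2 = 1"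
  defines "P \<equiv> x1 + x2 + x3" and "Q \<equiv> x1 + f * sqrt 2 * x3"
  assumes P: "P\<^sup>2 = 3/2" and Q: "Q\<^sup>2 = 207/100" and R: "x1 + e * sqrt 2 * x2 = k * P"
  shows "eliminant_const e f k + eliminant_cross e f k * (P * Q) = 0"
proof -
  define m where "m = 2 - e * sqrt 2 * k"
  define n where "n = - f * sqrt 2"
  define D where "D = 2 - (e + f) * sqrt 2"
  have "2 * (m * P + n * Q)\<^sup>2 - (m * P + n * Q) * D * (k * P + Q) + (((k * P)\<^sup>2 + Q\<^sup>2) / 2 - 1) * D\<^sup>2 = 0"
    using unit_vector_eliminant[OF e f unit] unfolding R P_def[symmetric] Q_def[symmetric] D_def[symmetric]
    by (simp add: m_def n_def algebra_simps)
  moreover have "2 * (m * P + n * Q)\<^sup>2 - (m * P + n * Q) * D * (k * P + Q) + (((k * P)\<^sup>2 + Q\<^sup>2) / 2 - 1) * D\<^sup>2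
      = P\<^sup>2 * (2 * m\<^sup>2 - D * m * k + k\<^sup>2 * D\<^sup>2 / 2) + Q\<^sup>2 * (2 * n\<^sup>2 - D * n + D\<^sup>2 / 2) - D\<^sup>2
        + (4 * m * n - D * (m + n * k)) * (P * Q)"
    by (simp add: algebra_simps power2_eq_square)
  ultimately show ?thesis
    unfolding eliminant_const_def eliminant_cross_def Let_def P Q m_def[symmetric] n_def[symmetric] D_def[symmetric]
    by simp
qed

lemma sqrt_2_gt: "141/100 < sqrt (2::real)"
  by (rule real_less_rsqrt) (simp add: power2_eq_square)

lemma sqrt_2_lt: "sqrt (2::real) < 142/100"
  by (rule real_less_lsqrt) (simp_all add: power2_eq_square)

lemma sqrt_2_mult_sqrt_2: "sqrt 2 * (sqrt 2 * z) = 2 * (z::real)"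
  by (simp add: mult.assoc[symmetric])

text \<open>
  In each case both sides normalise to \<open>u + v \<surd>2\<close> with rational \<open>u, v\<close>, and the enclosure
  \<open>1.41 < \<surd>2 < 1.42\<close> already separates them.
\<close>

lemma eliminant_sq_neq:
  fixes e f C \<epsilon> :: real
  assumes "e \<in> {1, -1}" "f \<in> {1, -1}" "\<epsilon> \<in> {1, -1}" "C \<in> {0, 1 + e * sqrt 2}"
  defines "k \<equiv> 2/3 * (C + 6/5 * \<epsilon>)"
  shows "(eliminant_const e f k)\<^sup>2 \<noteq> 621/200 * (eliminant_cross e f k)\<^sup>2"
  using assms(1-4) unfolding k_def insert_iff empty_iff simp_thms
  by (elim disjE; hypsubst;
      simp add: eliminant_const_def eliminant_cross_def Let_def algebra_simps power2_eq_square
        sqrt_2_mult_sqrt_2 add_divide_distrib diff_divide_distrib;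
      use sqrt_2_gt sqrt_2_lt in linarith)

lemma ellsberg_coordinates_infeasible:
  fixes x1 x2 x3 e f C :: real
  defines "P \<equiv> x1 + x2 + x3" and "Q \<equiv> x1 + f * sqrt 2 * x3" and "R \<equiv> x1 + e * sqrt 2 * x2"
  assumes e: "e \<in> {1, -1}" and f: "f \<in> {1, -1}" and C: "C \<in> {0, 1 + e * sqrt 2}"
    and unit: "x1\<^sup>2 + x2\<^sup>2 + x3\<^sup>2 = 1"
    and P: "P\<^sup>2 = 3/2" and Q: "Q\<^sup>2 = 207/100" and PR: "(P * R - C)\<^sup>2 = 36/25"
  shows False
proof -
  have "(P * R - C)\<^sup>2 = (6/5)\<^sup>2"
    using PR by (simp add: power_divide)
  then have "P * R = C + 6/5 \<or> P * R = C + 6/5 * -1"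
    unfolding power2_eq_iff by auto
  then obtain \<epsilon> :: real where \<epsilon>: "\<epsilon> \<in> {1, -1}" and PR_eq: "P * R = C + 6/5 * \<epsilon>"
    by (metis insertI1 insertI2 mult_1_right)
  define k where "k = 2/3 * (C + 6/5 * \<epsilon>)"
  have "k * P = 2/3 * P\<^sup>2 * R"
    unfolding k_def PR_eq[symmetric] by (simp add: power2_eq_square)
  then have "R = k * P"
    using P by simp
  then have "eliminant_const e f k + eliminant_cross e f k * (P * Q) = 0"
    using unit_vector_eliminant_reduced[of e f x1 x2 x3] e f unit P Q
    unfolding P_def Q_def R_def by auto
  moreover have "(P * Q)\<^sup>2 = 621/200"
    unfolding power_mult_distrib P Q by simp
  ultimately have "(eliminant_const e f k)\<^sup>2 = 621/200 * (eliminant_cross e f k)\<^sup>2"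
    by (simp add: eq_neg_iff_add_eq_0[symmetric] power_mult_distrib)
  then show False
    using eliminant_sq_neq[OF e f \<epsilon> C] by (simp add: k_def)
qed

lemma ellsberg_single_vector_infeasible:
  fixes x :: "real^3" and s1 s2 s3 s4 c :: real
  assumes s1: "s1 \<in> {1, -1}" and s2: "s2 \<in> {1, -1}" and s3: "s3 \<in> {1, -1}" and s4: "s4 \<in> {1, -1}"
    and unit: "norm x = 1" and cx: "(v_c \<bullet> x)\<^sup>2 = 1/2" and qx: "(v34 s3 s4 \<bullet> x)\<^sup>2 = 69/100"
    and c: "c \<in> {0, v12 s1 s2 \<bullet> v_c}" and rx: "((v_c \<bullet> x) * (v12 s1 s2 \<bullet> x) - c)\<^sup>2 = 4/25"
  shows False
proof -
  define e where "e = s1 * s2"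
  define f where "f = s3 * s4"
  define P where "P = x$1 + x$2 + x$3"
  define Q where "Q = x$1 + f * sqrt 2 * x$3"
  define R where "R = x$1 + e * sqrt 2 * x$2"
  have "s1 * s1 = 1" "s3 * s3 = 1"
    using s1 s3 by auto
  then have sign_cancel: "s1 * (s1 * z) = z" "s3 * (s3 * z) = z" for z
    by (simp_all add: mult.assoc[symmetric])
  have v12x: "v12 s1 s2 \<bullet> x = s1 * R / sqrt 3" and v34x: "v34 s3 s4 \<bullet> x = s3 * Q / sqrt 3"
    by (simp_all add: inner_v12 inner_v34 R_def Q_def e_def f_def algebra_simps sign_cancel)
  have v12c: "v12 s1 s2 \<bullet> v_c = s1 * (1 + e * sqrt 2) / 3"
    by (simp add: inner_v12_v_c e_def algebra_simps sign_cancel)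
  have v_cx: "v_c \<bullet> x = P / sqrt 3"
    by (simp add: inner_v_c P_def)
  have unit_coords: "(x$1)\<^sup>2 + (x$2)\<^sup>2 + (x$3)\<^sup>2 = 1"
    using unit by (simp add: norm_eq_sqrt_inner inner_vec3 power2_eq_square)
  have P_sq: "P\<^sup>2 = 3/2"
    using cx by (simp add: v_cx power_divide)
  have Q_sq: "Q\<^sup>2 = 207/100"
    using qx \<open>s3 * s3 = 1\<close> by (simp add: v34x power_divide power_mult_distrib flip: power2_eq_square)
  have PR_sq: "(P * R - 3 * s1 * c)\<^sup>2 = 36/25"
    using rx by (simp add: v_cx v12x power2_eq_square field_simps sign_cancel)
  have "3 * s1 * (v12 s1 s2 \<bullet> v_c) = 1 + e * sqrt 2"
    by (simp add: v12c sign_cancel)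
  then have C: "3 * s1 * c \<in> {0, 1 + e * sqrt 2}"
    using c by auto
  have signs: "e \<in> {1, -1}" "f \<in> {1, -1}"
    using s1 s2 s3 s4 by (auto simp: e_def f_def)
  show False
    using ellsberg_coordinates_infeasible[OF signs C] unit_coords P_sq Q_sq PR_sq
    unfolding P_def Q_def R_def by blast
qed

theorem mainTheorem4:
  fixes s1 s2 s3 s4 :: real
  assumes "s1 \<in> {1, -1}" and "s2 \<in> {1, -1}" and "s3 \<in> {1, -1}" and "s4 \<in> {1, -1}"
  shows "\<not> (\<exists>x y :: real^3.
             norm x = 1 \<and> norm y = 1 \<and>
             (v_c \<bullet> x)^2 = 1/2 \<and> (v34 s3 s4 \<bullet> x)^2 = 69/100 \<and>
             (v_c \<bullet> y)^2 = 1/2 \<and> (v12 s1 s2 \<bullet> y)^2 = 32/100 \<and>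
             x \<bullet> y \<in> {0, 1, -1})"
proof
  assume "\<exists>x y :: real^3.
             norm x = 1 \<and> norm y = 1 \<and>
             (v_c \<bullet> x)^2 = 1/2 \<and> (v34 s3 s4 \<bullet> x)^2 = 69/100 \<and>
             (v_c \<bullet> y)^2 = 1/2 \<and> (v12 s1 s2 \<bullet> y)^2 = 32/100 \<and>
             x \<bullet> y \<in> {0, 1, -1}"
  then obtain x y :: "real^3" where x: "norm x = 1" "(v_c \<bullet> x)\<^sup>2 = 1/2" "(v34 s3 s4 \<bullet> x)\<^sup>2 = 69/100"
    and y: "norm y = 1" "(v_c \<bullet> y)\<^sup>2 = 1/2" "(v12 s1 s2 \<bullet> y)\<^sup>2 = 32/100"
    and xy: "x \<bullet> y \<in> {0, 1, -1}"
    by blast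
  obtain c where "c \<in> {0, v12 s1 s2 \<bullet> v_c}"
    and "((v_c \<bullet> x) * (v12 s1 s2 \<bullet> x) - c)\<^sup>2 = (v12 s1 s2 \<bullet> y)\<^sup>2 / 2"
    using overlap_pair_reduction[OF norm_v_c x(1) y(1) x(2) y(2) xy] by blast
  then show False
    using ellsberg_single_vector_infeasible[OF assms x] y(3) by simp
qed

end
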